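(* Let $\Gamma$ be a single-player extensive-form game without absentmindedness, and let $\mathscr C$ be the class of games sharing the same game tree and infoset partition as $\Gamma$ (with arbitrary nonnegative utilities). Then $\mathrm{VoR}^{\mathrm{opt}}(\mathscr C)\le\max_{h\in\mathcal H_c}\beta(h)$, where by convention this maximum is $1$ if $\mathcal H_c=\emptyset$.
   Context: A single-player extensive-form game consists of a finite rooted tree (nodes $\mathcal H$, leaves $\mathcal Z$, actions $A_h$); nonterminal nodes belong to Player 1 or to chance; $\mathcal H_c$ is the set of chance nodes, each with a fixed distribution on its actions; Player 1 has utility $u_1:\mathcal Z\to\mathbb R_{\ge0}$ and a partition of its nodes into infosets with common action sets. The game tree consists of nodes, actions and chance distributions. For a node $h$, $\mathrm{obs}(h)$ lists (player, infoset, action) along the root-to-$h$ path (excluding $h$); $\mathrm{obs}_1(h)$ restricts to Player 1. Absentmindedness: some infoset appears more than once in $\mathrm{obs}(h)$ for some $h$. $\mathrm{pr}_1(\Gamma)$ has the same tree and utilities with each infoset partitioned into classes of $h\sim h'\iff\mathrm{obs}_1(h)=\mathrm{obs}_1(h')$. $u_1(\mathrm{opt}(\cdot))$ is the maximum expected utility over behavioral strategies; $\mathrm{VoR}^{\mathrm{opt}}(\Gamma)=u_1(\mathrm{opt}(\mathrm{pr}_1(\Gamma)))/u_1(\mathrm{opt}(\Gamma))$; $\mathrm{VoR}^{\mathrm{opt}}(\mathscr C)=\sup_{\Gamma'\in\mathscr C}\mathrm{VoR}^{\mathrm{opt}}(\Gamma')$. Branching factor: for $h\in\mathcal H_c$ and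 $a\in A_h$, $H_{ha}$ is the set of chance nodes in the subtree rooted at the child of $h$ via $a$; $b_h(a)=1$ if $H_{ha}=\emptyset$, else $\max_{h'\in H_{ha}}\beta(h')$; $\beta(h)=\sum_{a\in A_h}b_h(a)$. *)

theory Defs
  imports Complex_Main
begin

text \<open>Single-player extensive-form games. A node is identified with the list of
actions leading to it from the root (the root is the empty list).\<close>

record ('a, 'i) game =
  nodes  :: "'a list set"
  chance :: "'a list set"
  cprob  :: "'a list \<Rightarrow> 'a \<Rightarrow> real"
  info   :: "'a list \<Rightarrow> 'i"

definition actions :: "('a, 'i) game \<Rightarrow> 'a list \<Rightarrow> 'a set" where
  "actions G h = {a. h @ [a] \<in> nodes G}"

definition leaves :: "('a, 'i) game \<Rightarrow> 'a list set" where
  "leaves G = {h \<in> nodes G. actions G h = {}}"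

definition p1_nodes :: "('a, 'i) game \<Rightarrow> 'a list set" where
  "p1_nodes G = {h \<in> nodes G. actions G h \<noteq> {} \<and> h \<notin> chance G}"

definition wf_game :: "('a, 'i) game \<Rightarrow> bool" where
  "wf_game G \<longleftrightarrow>
     finite (nodes G) \<and> [] \<in> nodes G \<and>
     (\<forall>h a. h @ [a] \<in> nodes G \<longrightarrow> h \<in> nodes G) \<and>
     chance G \<subseteq> nodes G \<and> (\<forall>h \<in> chance G. actions G h \<noteq> {}) \<and>
     (\<forall>h \<in> chance G. (\<forall>a \<in> actions G h. cprob G h a \<ge> 0) \<and>
                     (\<Sum>a \<in> actions G h. cprob G h a) = 1) \<and>
     (\<forall>h \<in> p1_nodes G. \<forall>h' \<in> p1_nodes G. info G h = info G h' \<longrightarrow> actions G h = actions G h')"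

definition no_absentmindedness :: "('a, 'i) game \<Rightarrow> bool" where
  "no_absentmindedness G \<longleftrightarrow>
     (\<forall>h \<in> nodes G. \<forall>i j. i < j \<and> j < length h \<and>
        take i h \<in> p1_nodes G \<and> take j h \<in> p1_nodes G \<longrightarrow>
        info G (take i h) \<noteq> info G (take j h))"

definition obs1 :: "('a, 'i) game \<Rightarrow> 'a list \<Rightarrow> ('i \<times> 'a) list" where
  "obs1 G h = [(info G (take i h), h ! i). i \<leftarrow> [0..<length h], take i h \<notin> chance G]"

text \<open>Behavioral strategies, relative to an infoset labelling \<open>L\<close> of the Player-1 nodes
(two Player-1 nodes are in the same infoset iff they have the same label).\<close>
definition behavioral :: "('a, 'i) game \<Rightarrow> ('a list \<Rightarrow> 'l) \<Rightarrow> ('l \<Rightarrow> 'a \<Rightarrow> real) \<Rightarrow> bool" where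
  "behavioral G L \<pi> \<longleftrightarrow>
     (\<forall>h \<in> p1_nodes G. (\<forall>a \<in> actions G h. \<pi> (L h) a \<ge> 0) \<and>
                      (\<Sum>a \<in> actions G h. \<pi> (L h) a) = 1)"

definition reach :: "('a, 'i) game \<Rightarrow> ('a list \<Rightarrow> 'l) \<Rightarrow> ('l \<Rightarrow> 'a \<Rightarrow> real) \<Rightarrow> 'a list \<Rightarrow> real" where
  "reach G L \<pi> z = (\<Prod>i<length z. if take i z \<in> chance G then cprob G (take i z) (z ! i)
                                   else \<pi> (L (take i z)) (z ! i))"

definition exp_util :: "('a, 'i) game \<Rightarrow> ('a list \<Rightarrow> 'l) \<Rightarrow> ('l \<Rightarrow> 'a \<Rightarrow> real) \<Rightarrow> ('a list \<Rightarrow> real) \<Rightarrow> real" where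
  "exp_util G L \<pi> u = (\<Sum>z \<in> leaves G. reach G L \<pi> z * u z)"

definition opt_val :: "('a, 'i) game \<Rightarrow> ('a list \<Rightarrow> 'l) \<Rightarrow> ('a list \<Rightarrow> real) \<Rightarrow> real" where
  "opt_val G L u = (SUP \<pi> \<in> {\<pi>. behavioral G L \<pi>}. exp_util G L \<pi> u)"

text \<open>\<open>pr_1(\<Gamma>)\<close>: same tree, infosets refined by \<open>obs_1\<close>.\<close>
definition pr1_labels :: "('a, 'i) game \<Rightarrow> 'a list \<Rightarrow> 'i \<times> ('i \<times> 'a) list" where
  "pr1_labels G h = (info G h, obs1 G h)"

definition VoR_opt :: "('a, 'i) game \<Rightarrow> ('a list \<Rightarrow> real) \<Rightarrow> real" where
  "VoR_opt G u = opt_val G (pr1_labels G) u / opt_val G (info G) u"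

definition VoR_opt_class :: "('a, 'i) game \<Rightarrow> real" where
  "VoR_opt_class G = (SUP u \<in> {u. \<forall>z \<in> leaves G. u z \<ge> 0}. VoR_opt G u)"

definition subtree_chance :: "('a, 'i) game \<Rightarrow> 'a list \<Rightarrow> 'a list set" where
  "subtree_chance G g = {h' \<in> chance G. \<exists>w. h' = g @ w}"

fun beta_fuel :: "nat \<Rightarrow> ('a, 'i) game \<Rightarrow> 'a list \<Rightarrow> nat" where
  "beta_fuel 0 G h = 1"
| "beta_fuel (Suc n) G h =
     (\<Sum>a \<in> actions G h. if subtree_chance G (h @ [a]) = {} then 1
                          else Max (beta_fuel n G ` subtree_chance G (h @ [a])))"

definition beta :: "('a, 'i) game \<Rightarrow> 'a list \<Rightarrow> nat" where
  "beta G h = beta_fuel (card (nodes G)) G h"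

definition beta_max :: "('a, 'i) game \<Rightarrow> nat" where
  "beta_max G = (if chance G = {} then 1 else Max (beta G ` chance G))"

end

theory Submission
  imports Defs "HOL-Library.Indicator_Function"
begin

text \<open>Refining the infosets to \<open>pr_1(\<Gamma>)\<close> preserves the absence of absentmindedness, so
  expected utility is affine in the mixed action at each infoset and some pure strategy \<open>s\<close> of
  the refined game is optimal. The leaves reachable under \<open>s\<close> are covered by at most
  \<open>max \<beta>\<close> pure strategies of \<open>\<Gamma>\<close>: at a Player-1 node every covering strategy is redirected
  to the action of \<open>s\<close>, which is harmless because that infoset does not recur further down,
  and at a chance node the covers of the children are united, which adds up their sizes exactly
  as in the recursion defining \<open>\<beta>\<close>. For nonnegative utilities the value of \<open>s\<close> is thus at
  most the total value of the covering strategies, i.e. at most \<open>max \<beta>\<close> times the optimum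
  of \<open>\<Gamma>\<close>.\<close>

section \<open>Paths in well-formed game trees\<close>

lemma wf_game_prefix_in_nodes:
  assumes wf: "wf_game G" and "h @ w \<in> nodes G"
  shows "h \<in> nodes G"
  using assms(2)
proof (induction w rule: rev_induct)
  case (snoc a w)
  then show ?case using wf unfolding wf_game_def by (metis append_assoc)
qed simp

lemma wf_game_take_in_nodes: "wf_game G \<Longrightarrow> z \<in> nodes G \<Longrightarrow> take i z \<in> nodes G"
  by (metis append_take_drop_id wf_game_prefix_in_nodes)

lemma wf_game_finite_actions: "wf_game G \<Longrightarrow> finite (actions G h)"
proof -
  assume "wf_game G"
  then have "finite ((\<lambda>a. h @ [a]) -` nodes G)"
    by (intro finite_vimageI) (auto simp: wf_game_def inj_def)
  then show ?thesis by (simp add: actions_def vimage_def)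
qed

lemma wf_game_nth_in_actions:
  "wf_game G \<Longrightarrow> z \<in> nodes G \<Longrightarrow> i < length z \<Longrightarrow> z ! i \<in> actions G (take i z)"
  by (metis actions_def mem_Collect_eq take_Suc_conv_app_nth wf_game_take_in_nodes)

lemma wf_game_take_in_p1_nodes:
  "wf_game G \<Longrightarrow> z \<in> nodes G \<Longrightarrow> i < length z \<Longrightarrow> take i z \<notin> chance G \<Longrightarrow> take i z \<in> p1_nodes G"
  unfolding p1_nodes_def using wf_game_nth_in_actions wf_game_take_in_nodes by fastforce

lemma wf_game_leaf_append:
  assumes wf: "wf_game G" and "x \<in> leaves G" and "x @ w \<in> nodes G"
  shows "w = []"
proof (rule ccontr)
  assume "w \<noteq> []"
  then obtain b w' where "x @ w = (x @ [b]) @ w'" by (cases w) auto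
  then have "b \<in> actions G x"
    using assms(3) wf_game_prefix_in_nodes[OF wf] by (simp add: actions_def)
  with \<open>x \<in> leaves G\<close> show False by (simp add: leaves_def)
qed

lemma wf_game_length_less_card:
  assumes wf: "wf_game G" and z: "z \<in> nodes G"
  shows "length z < card (nodes G)"
proof -
  have inj: "inj_on (\<lambda>i. take i z) {..length z}"
    by (rule inj_onI) (metis atMost_iff length_take min.absorb2)
  have "(\<lambda>i. take i z) ` {..length z} \<subseteq> nodes G"
    using wf_game_take_in_nodes[OF wf z] by blast
  then have "card ((\<lambda>i. take i z) ` {..length z}) \<le> card (nodes G)"
    using wf by (intro card_mono) (auto simp: wf_game_def)
  then show ?thesis by (simp add: card_image[OF inj])
qed

lemma wf_game_chance_not_leaf: "wf_game G \<Longrightarrow> h \<in> chance G \<Longrightarrow> h \<notin> leaves G"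
  by (simp add: wf_game_def leaves_def)

lemma member_le_one_if_sum_eq_one:
  fixes f :: "'a \<Rightarrow> real"
  assumes "finite A" "\<forall>b\<in>A. 0 \<le> f b" "sum f A = 1" "a \<in> A"
  shows "f a \<le> 1"
  using member_le_sum[of a A f] assms by auto

lemma wf_game_cprob_bounds:
  assumes wf: "wf_game G" and "h \<in> chance G" and "a \<in> actions G h"
  shows "0 \<le> cprob G h a \<and> cprob G h a \<le> 1"
  using assms wf_game_finite_actions[OF wf] member_le_one_if_sum_eq_one[of "actions G h" "cprob G h"]
  unfolding wf_game_def by blast

lemma behavioral_bounds:
  assumes wf: "wf_game G" and "behavioral G L \<pi>" and "h \<in> p1_nodes G" and "a \<in> actions G h"
  shows "0 \<le> \<pi> (L h) a \<and> \<pi> (L h) a \<le> 1"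
  using assms wf_game_finite_actions[OF wf] member_le_one_if_sum_eq_one[of "actions G h" "\<pi> (L h)"]
  unfolding behavioral_def by blast

lemma reach_bounds:
  assumes wf: "wf_game G" and b: "behavioral G L \<pi>" and z: "z \<in> nodes G"
  shows "0 \<le> reach G L \<pi> z \<and> reach G L \<pi> z \<le> 1"
  unfolding reach_def
  using wf_game_cprob_bounds[OF wf _ wf_game_nth_in_actions[OF wf z]]
    behavioral_bounds[OF wf b wf_game_take_in_p1_nodes[OF wf z] wf_game_nth_in_actions[OF wf z]]
  by (auto intro!: prod_nonneg prod_le_1)

lemma exp_util_bounds:
  assumes wf: "wf_game G" and b: "behavioral G L \<pi>" and u: "\<forall>z\<in>leaves G. 0 \<le> u z"
  shows "0 \<le> exp_util G L \<pi> u \<and> exp_util G L \<pi> u \<le> (\<Sum>z\<in>leaves G. u z)"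
  using reach_bounds[OF wf b] u unfolding exp_util_def leaves_def
  by (auto intro!: sum_nonneg sum_mono simp: mult_left_le_one_le)

lemma exp_util_le_opt_val:
  assumes wf: "wf_game G" and "behavioral G L \<pi>" and u: "\<forall>z\<in>leaves G. 0 \<le> u z"
  shows "exp_util G L \<pi> u \<le> opt_val G L u"
  unfolding opt_val_def
  by (rule cSUP_upper) (use assms exp_util_bounds[OF wf _ u] in \<open>auto intro!: bdd_aboveI2\<close>)

lemma opt_val_le:
  assumes "behavioral G L \<pi>\<^sub>0" and "\<And>\<pi>. behavioral G L \<pi> \<Longrightarrow> exp_util G L \<pi> u \<le> c"
  shows "opt_val G L u \<le> c"
  unfolding opt_val_def using assms by (intro cSUP_least) auto

section \<open>Pure strategies suffice without absentmindedness\<close>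

definition action_consistent :: "('a, 'i) game \<Rightarrow> ('a list \<Rightarrow> 'l) \<Rightarrow> bool" where
  "action_consistent G L \<longleftrightarrow>
     (\<forall>h\<in>p1_nodes G. \<forall>h'\<in>p1_nodes G. L h = L h' \<longrightarrow> actions G h = actions G h')"

definition no_absentmindedness_wrt :: "('a, 'i) game \<Rightarrow> ('a list \<Rightarrow> 'l) \<Rightarrow> bool" where
  "no_absentmindedness_wrt G L \<longleftrightarrow>
     (\<forall>z\<in>nodes G. \<forall>i j. i < j \<and> j < length z \<and>
        take i z \<in> p1_nodes G \<and> take j z \<in> p1_nodes G \<longrightarrow> L (take i z) \<noteq> L (take j z))"

lemma no_absentmindedness_iff_wrt_info:
  "no_absentmindedness G \<longleftrightarrow> no_absentmindedness_wrt G (info G)"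
  unfolding no_absentmindedness_def no_absentmindedness_wrt_def ..

lemma wf_game_action_consistent_info: "wf_game G \<Longrightarrow> action_consistent G (info G)"
  unfolding action_consistent_def wf_game_def by blast

lemma action_consistent_refine:
  assumes "action_consistent G L" and "\<And>h h'. L' h = L' h' \<Longrightarrow> L h = L h'"
  shows "action_consistent G L'"
  using assms unfolding action_consistent_def by blast

lemma no_absentmindedness_wrt_refine:
  assumes "no_absentmindedness_wrt G L" and "\<And>h h'. L' h = L' h' \<Longrightarrow> L h = L h'"
  shows "no_absentmindedness_wrt G L'"
  using assms unfolding no_absentmindedness_wrt_def by metis

lemma no_absentmindedness_wrt_label_unique:
  assumes wf: "wf_game G" and "no_absentmindedness_wrt G L" and z: "z \<in> nodes G"
    and "i < length z" "take i z \<notin> chance G" "j < length z" "take j z \<notin> chance G"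
    and "L (take i z) = L (take j z)"
  shows "i = j"
proof -
  have "take i z \<in> p1_nodes G" "take j z \<in> p1_nodes G"
    using wf_game_take_in_p1_nodes[OF wf z] assms by auto
  with assms show ?thesis
    unfolding no_absentmindedness_wrt_def by (metis linorder_neqE_nat)
qed

lemma behavioral_cong:
  assumes "\<forall>h\<in>p1_nodes G. \<pi> (L h) = \<pi>' (L h)"
  shows "behavioral G L \<pi> \<longleftrightarrow> behavioral G L \<pi>'"
  using assms unfolding behavioral_def by simp

lemma exp_util_cong:
  assumes wf: "wf_game G" and "\<forall>h\<in>p1_nodes G. \<pi> (L h) = \<pi>' (L h)"
  shows "exp_util G L \<pi> u = exp_util G L \<pi>' u"
proof -
  have "reach G L \<pi> z = reach G L \<pi>' z" if "z \<in> nodes G" for z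
    unfolding reach_def
    using assms(2) wf_game_take_in_p1_nodes[OF wf that] by (intro prod.cong) auto
  then show ?thesis unfolding exp_util_def leaves_def by simp
qed

text \<open>With no absentmindedness, the label \<open>l\<close> occurs at most once on every path, so the
  realisation probability is affine in the mixed action \<open>\<pi> l\<close>.\<close>

lemma reach_fun_upd_factor:
  assumes wf: "wf_game G" and nam: "no_absentmindedness_wrt G L" and z: "z \<in> nodes G"
    and i0: "i0 < length z" "take i0 z \<notin> chance G" "L (take i0 z) = l"
  obtains R where "\<And>e. reach G L (\<pi>(l := e)) z = e (z ! i0) * R"
proof -
  define factor where "factor e i = (if take i z \<in> chance G then cprob G (take i z) (z ! i)
    else (\<pi>(l := e)) (L (take i z)) (z ! i))" for e i
  define R where "R = (\<Prod>i\<in>{..<length z} - {i0}. factor (\<pi> l) i)"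
  have factor_eq: "factor e i = factor (\<pi> l) i" if "i \<in> {..<length z} - {i0}" for e i
    using that no_absentmindedness_wrt_label_unique[OF wf nam z _ _ i0(1,2)] i0(3)
    by (auto simp: factor_def)
  have "reach G L (\<pi>(l := e)) z = e (z ! i0) * R" for e
  proof -
    have "reach G L (\<pi>(l := e)) z = (\<Prod>i<length z. factor e i)"
      unfolding reach_def factor_def ..
    also have "\<dots> = factor e i0 * (\<Prod>i\<in>{..<length z} - {i0}. factor e i)"
      using i0(1) by (intro prod.remove) auto
    also have "(\<Prod>i\<in>{..<length z} - {i0}. factor e i) = R"
      unfolding R_def by (rule prod.cong[OF refl factor_eq])
    also have "factor e i0 = e (z ! i0)" using i0 by (simp add: factor_def)
    finally show ?thesis .
  qed
  then show ?thesis by (rule that)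
qed

lemma reach_fun_upd_mixture:
  assumes wf: "wf_game G" and nam: "no_absentmindedness_wrt G L"
    and ac: "action_consistent G L" and z: "z \<in> nodes G"
    and h0: "h0 \<in> p1_nodes G" "L h0 = l" and d: "(\<Sum>a\<in>actions G h0. d a) = 1"
  shows "reach G L (\<pi>(l := d)) z = (\<Sum>a\<in>actions G h0. d a * reach G L (\<pi>(l := indicator {a})) z)"
proof (cases "\<exists>i<length z. take i z \<notin> chance G \<and> L (take i z) = l")
  case False
  then have "reach G L (\<pi>(l := e)) z = reach G L \<pi> z" for e
    unfolding reach_def by (intro prod.cong) auto
  then show ?thesis by (simp flip: sum_distrib_right add: d)
next
  case True
  then obtain i0 where i0: "i0 < length z" "take i0 z \<notin> chance G" "L (take i0 z) = l" by auto
  obtain R where reach_eq: "\<And>e. reach G L (\<pi>(l := e)) z = e (z ! i0) * R"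
    using reach_fun_upd_factor[OF wf nam z i0] by blast
  have "actions G (take i0 z) = actions G h0"
    using ac h0 i0 wf_game_take_in_p1_nodes[OF wf z i0(1,2)] unfolding action_consistent_def by metis
  then have "z ! i0 \<in> actions G h0" using wf_game_nth_in_actions[OF wf z i0(1)] by simp
  moreover have "d a * (indicator {a} (z ! i0) * R) = (if a = z ! i0 then d a * R else 0)" for a
    by simp
  ultimately show ?thesis using wf_game_finite_actions[OF wf] by (simp add: reach_eq)
qed

lemma exp_util_fun_upd_mixture:
  assumes wf: "wf_game G" and nam: "no_absentmindedness_wrt G L"
    and ac: "action_consistent G L"
    and h0: "h0 \<in> p1_nodes G" "L h0 = l" and d: "(\<Sum>a\<in>actions G h0. d a) = 1"
  shows "exp_util G L (\<pi>(l := d)) u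
    = (\<Sum>a\<in>actions G h0. d a * exp_util G L (\<pi>(l := indicator {a})) u)"
proof -
  have "exp_util G L (\<pi>(l := d)) u
      = (\<Sum>z\<in>leaves G. \<Sum>a\<in>actions G h0. d a * (reach G L (\<pi>(l := indicator {a})) z * u z))"
    unfolding exp_util_def
    by (intro sum.cong) (simp_all add: reach_fun_upd_mixture[OF wf nam ac _ h0 d] leaves_def
        sum_distrib_right mult.assoc)
  also have "\<dots> = (\<Sum>a\<in>actions G h0. d a * exp_util G L (\<pi>(l := indicator {a})) u)"
    unfolding exp_util_def by (subst sum.swap) (simp add: sum_distrib_left)
  finally show ?thesis .
qed

lemma behavioral_fun_upd_indicator:
  assumes b: "behavioral G L \<pi>" and ac: "action_consistent G L"
    and h0: "h0 \<in> p1_nodes G" "L h0 = l" and a: "a \<in> actions G h0" and fin: "finite (actions G h0)"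
  shows "behavioral G L (\<pi>(l := indicator {a}))"
  unfolding behavioral_def
proof (rule ballI, rule conjI)
  fix h assume h: "h \<in> p1_nodes G"
  show "\<forall>b\<in>actions G h. 0 \<le> (\<pi>(l := indicator {a})) (L h) b"
    using b h unfolding behavioral_def by auto
  have "actions G h = actions G h0" if "L h = l"
    using ac h h0 that unfolding action_consistent_def by metis
  then show "(\<Sum>b\<in>actions G h. (\<pi>(l := indicator {a})) (L h) b) = 1"
    using b h a fin unfolding behavioral_def by (auto simp: indicator_def)
qed

lemma exists_pure_choice_improving:
  assumes wf: "wf_game G" and nam: "no_absentmindedness_wrt G L" and ac: "action_consistent G L"
    and b: "behavioral G L \<pi>" and h0: "h0 \<in> p1_nodes G" "L h0 = l"
  obtains a where "behavioral G L (\<pi>(l := indicator {a}))"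
    and "exp_util G L \<pi> u \<le> exp_util G L (\<pi>(l := indicator {a})) u"
proof -
  define A where "A = actions G h0"
  define f where "f a = exp_util G L (\<pi>(l := indicator {a})) u" for a
  have fin: "finite A" and ne: "A \<noteq> {}"
    using wf_game_finite_actions[OF wf] h0 by (auto simp: A_def p1_nodes_def)
  have "Max (f ` A) \<in> f ` A" using fin ne by simp
  then obtain a0 where a0: "a0 \<in> A" "f a0 = Max (f ` A)" by (metis imageE)
  have dist: "(\<Sum>a\<in>A. \<pi> l a) = 1" "\<forall>a\<in>A. 0 \<le> \<pi> l a"
    using b h0 unfolding behavioral_def A_def by auto
  have "exp_util G L \<pi> u = exp_util G L (\<pi>(l := \<pi> l)) u" by simp
  also have "\<dots> = (\<Sum>a\<in>A. \<pi> l a * f a)"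
    unfolding f_def A_def using exp_util_fun_upd_mixture[OF wf nam ac h0] dist A_def by blast
  also have "\<dots> \<le> (\<Sum>a\<in>A. \<pi> l a * f a0)"
    using dist a0 fin by (intro sum_mono mult_left_mono) auto
  also have "\<dots> = f a0" by (simp flip: sum_distrib_right add: dist)
  finally show ?thesis
    using that behavioral_fun_upd_indicator[OF b ac h0] a0 fin unfolding f_def A_def by blast
qed

definition pure :: "('l \<Rightarrow> 'a) \<Rightarrow> 'l \<Rightarrow> 'a \<Rightarrow> real" where
  "pure s l = indicator {s l}"

lemma exists_pure_dominating_if_pure_outside:
  assumes wf: "wf_game G" and nam: "no_absentmindedness_wrt G L" and ac: "action_consistent G L"
    and "finite F"
  shows "behavioral G L \<pi> \<Longrightarrow> \<forall>h\<in>p1_nodes G. L h \<notin> F \<longrightarrow> \<pi> (L h) = pure s (L h) \<Longrightarrow>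
    \<exists>s'. behavioral G L (pure s') \<and> exp_util G L \<pi> u \<le> exp_util G L (pure s') u"
  using \<open>finite F\<close>
proof (induction F arbitrary: \<pi> s rule: finite_induct)
  case empty
  then show ?case using behavioral_cong exp_util_cong[OF wf] by (metis empty_iff order_refl)
next
  case (insert l F)
  show ?case
  proof (cases "\<exists>h0\<in>p1_nodes G. L h0 = l")
    case True
    then obtain h0 where h0: "h0 \<in> p1_nodes G" "L h0 = l" by blast
    obtain a where a: "behavioral G L (\<pi>(l := indicator {a}))"
      "exp_util G L \<pi> u \<le> exp_util G L (\<pi>(l := indicator {a})) u"
      using exists_pure_choice_improving[OF wf nam ac insert.prems(1) h0] by blast
    have "\<forall>h\<in>p1_nodes G. L h \<notin> F \<longrightarrow> (\<pi>(l := indicator {a})) (L h) = pure (s(l := a)) (L h)"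
      using insert.prems(2) by (auto simp: pure_def)
    then show ?thesis using insert.IH[OF a(1)] a(2) by (meson order_trans)
  next
    case False
    then show ?thesis using insert by auto
  qed
qed

lemma exists_pure_dominating:
  assumes wf: "wf_game G" and nam: "no_absentmindedness_wrt G L" and ac: "action_consistent G L"
    and b: "behavioral G L \<pi>"
  obtains s where "behavioral G L (pure s)" and "exp_util G L \<pi> u \<le> exp_util G L (pure s) u"
proof -
  have "finite (L ` p1_nodes G)"
    using wf by (auto simp: wf_game_def p1_nodes_def intro: finite_subset)
  then show ?thesis
    using exists_pure_dominating_if_pure_outside[OF wf nam ac _ b, of "L ` p1_nodes G" undefined] that by blast
qed

section \<open>Covering the leaves of a pure plan\<close>

definition follows :: "('a, 'i) game \<Rightarrow> ('a list \<Rightarrow> 'a) \<Rightarrow> 'a list \<Rightarrow> nat \<Rightarrow> bool" where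
  "follows G \<sigma> z p \<longleftrightarrow>
     (\<forall>j. p \<le> j \<longrightarrow> j < length z \<longrightarrow> take j z \<notin> chance G \<longrightarrow> z ! j = \<sigma> (take j z))"

definition leaves_following :: "('a, 'i) game \<Rightarrow> ('a list \<Rightarrow> 'a) \<Rightarrow> 'a list \<Rightarrow> 'a list set" where
  "leaves_following G \<sigma> x = {z \<in> leaves G. \<exists>w. z = x @ w \<and> follows G \<sigma> z (length x)}"

definition covered_by_pure ::
    "('a, 'i) game \<Rightarrow> ('a list \<Rightarrow> 'l) \<Rightarrow> ('a list \<Rightarrow> 'a) \<Rightarrow> 'a list \<Rightarrow> nat \<Rightarrow> bool" where
  "covered_by_pure G L \<sigma> x N \<longleftrightarrow> (\<exists>T. finite T \<and> card T \<le> N \<and>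
     (\<forall>z\<in>leaves_following G \<sigma> x. \<exists>t\<in>T. follows G (t \<circ> L) z (length x)))"

lemma follows_Suc:
  "follows G \<sigma> z p \<longleftrightarrow> follows G \<sigma> z (Suc p) \<and>
     (p < length z \<longrightarrow> take p z \<notin> chance G \<longrightarrow> z ! p = \<sigma> (take p z))"
  unfolding follows_def by (metis Suc_leD Suc_leI le_neq_implies_less order_refl)

lemma finite_leaves_following: "wf_game G \<Longrightarrow> finite (leaves_following G \<sigma> x)"
  unfolding leaves_following_def leaves_def wf_game_def by simp

lemma leaves_following_not_node:
  assumes wf: "wf_game G" and "x \<notin> nodes G"
  shows "leaves_following G \<sigma> x = {}"
  using assms wf_game_prefix_in_nodes[OF wf] by (auto simp: leaves_following_def leaves_def)

lemma leaves_following_child: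
  assumes wf: "wf_game G" and z: "z \<in> leaves_following G \<sigma> x" and x: "x \<notin> leaves G"
  shows "length x < length z" "take (length x) z = x"
    and "z \<in> leaves_following G \<sigma> (x @ [z ! length x])"
proof -
  obtain w where w: "z = x @ w" "z \<in> leaves G" "follows G \<sigma> z (length x)"
    using z by (auto simp: leaves_following_def)
  have "follows G \<sigma> z (Suc (length x))" using w(3) follows_Suc by blast
  obtain b w' where "w = b # w'" using w x by (cases w) auto
  with w \<open>follows G \<sigma> z (Suc (length x))\<close> show "length x < length z" "take (length x) z = x"
    and "z \<in> leaves_following G \<sigma> (x @ [z ! length x])"
    by (auto simp: leaves_following_def)
qed

lemma covered_by_pure_mono:
  "covered_by_pure G L \<sigma> x N \<Longrightarrow> N \<le> M \<Longrightarrow> covered_by_pure G L \<sigma> x M"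
  unfolding covered_by_pure_def by (meson order_trans)

lemma covered_by_pure_not_node:
  "wf_game G \<Longrightarrow> x \<notin> nodes G \<Longrightarrow> covered_by_pure G L \<sigma> x N"
  unfolding covered_by_pure_def using leaves_following_not_node by fastforce

lemma covered_by_pure_leaf:
  assumes wf: "wf_game G" and x: "x \<in> leaves G" and N: "1 \<le> N"
  shows "covered_by_pure G L \<sigma> x N"
proof -
  have "z = x" if "z \<in> leaves_following G \<sigma> x" for z
    using that wf_game_leaf_append[OF wf x] by (auto simp: leaves_following_def leaves_def)
  moreover have "follows G (t \<circ> L) x (length x)" for t by (simp add: follows_def)
  ultimately have "\<forall>z\<in>leaves_following G \<sigma> x. follows G (t \<circ> L) z (length x)" for t
    by metis
  then show ?thesis unfolding covered_by_pure_def using N by (intro exI[of _ "{undefined}"]) auto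
qed

lemma covered_by_pure_chance:
  assumes wf: "wf_game G" and x: "x \<in> chance G"
    and children: "\<And>a. a \<in> actions G x \<Longrightarrow> covered_by_pure G L \<sigma> (x @ [a]) (N a)"
  shows "covered_by_pure G L \<sigma> x (\<Sum>a\<in>actions G x. N a)"
proof -
  obtain T where T: "\<And>a. a \<in> actions G x \<Longrightarrow> finite (T a) \<and> card (T a) \<le> N a \<and>
      (\<forall>z\<in>leaves_following G \<sigma> (x @ [a]). \<exists>t\<in>T a. follows G (t \<circ> L) z (Suc (length x)))"
    using children unfolding covered_by_pure_def by (simp add: Ball_def) metis
  have fin: "finite (actions G x)" by (rule wf_game_finite_actions[OF wf])
  have "card (\<Union>a\<in>actions G x. T a) \<le> (\<Sum>a\<in>actions G x. card (T a))"
    by (rule card_UN_le[OF fin])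
  also have "\<dots> \<le> (\<Sum>a\<in>actions G x. N a)" using T by (intro sum_mono) blast
  finally have card: "card (\<Union>a\<in>actions G x. T a) \<le> (\<Sum>a\<in>actions G x. N a)" .
  have "\<exists>t\<in>\<Union>a\<in>actions G x. T a. follows G (t \<circ> L) z (length x)"
    if z: "z \<in> leaves_following G \<sigma> x" for z
  proof -
    note child = leaves_following_child[OF wf z wf_game_chance_not_leaf[OF wf x]]
    have zn: "z \<in> nodes G" using z by (simp add: leaves_following_def leaves_def)
    have "z ! length x \<in> actions G x"
      using wf_game_nth_in_actions[OF wf zn child(1)] child(2) by simp
    with T child(3) obtain t where "t \<in> T (z ! length x)" "follows G (t \<circ> L) z (Suc (length x))"
      by blast
    moreover have "take (length x) z \<in> chance G" using child(2) x by simp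
    ultimately show ?thesis
      using \<open>z ! length x \<in> actions G x\<close> follows_Suc[of G _ z "length x"] by blast
  qed
  then show ?thesis unfolding covered_by_pure_def using T fin card by blast
qed

lemma covered_by_pure_p1:
  assumes wf: "wf_game G" and nam: "no_absentmindedness_wrt G L" and x: "x \<in> p1_nodes G"
    and child: "covered_by_pure G L \<sigma> (x @ [\<sigma> x]) N"
  shows "covered_by_pure G L \<sigma> x N"
proof -
  obtain T where T: "finite T" "card T \<le> N"
    "\<forall>z\<in>leaves_following G \<sigma> (x @ [\<sigma> x]). \<exists>t\<in>T. follows G (t \<circ> L) z (Suc (length x))"
    using child unfolding covered_by_pure_def by auto
  have "\<exists>t\<in>T. follows G (t(L x := \<sigma> x) \<circ> L) z (length x)"
    if z: "z \<in> leaves_following G \<sigma> x" for z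
  proof -
    have "x \<notin> leaves G" "x \<notin> chance G" using x by (auto simp: p1_nodes_def leaves_def)
    note child = leaves_following_child[OF wf z \<open>x \<notin> leaves G\<close>]
    have zn: "z \<in> nodes G" using z by (simp add: leaves_following_def leaves_def)
    have "z ! length x = \<sigma> x"
      using z child(1,2) \<open>x \<notin> chance G\<close> by (auto simp: leaves_following_def follows_def)
    with T(3) child(3) obtain t where t: "t \<in> T" "follows G (t \<circ> L) z (Suc (length x))"
      by auto
    have "L (take j z) \<noteq> L x"
      if "length x < j" "j < length z" "take j z \<notin> chance G" for j
      using no_absentmindedness_wrt_label_unique[OF wf nam zn that(2,3) child(1)] child(2)
        \<open>x \<notin> chance G\<close> that(1) by auto
    then have "follows G (t(L x := \<sigma> x) \<circ> L) z (Suc (length x))"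
      using t(2) by (auto simp: follows_def)
    then show ?thesis
      using t(1) child(2) \<open>z ! length x = \<sigma> x\<close> follows_Suc[of G _ z "length x"] by auto
  qed
  moreover have "card ((\<lambda>t. t(L x := \<sigma> x)) ` T) \<le> N"
    using card_image_le[OF T(1)] T(2) by (meson order_trans)
  ultimately show ?thesis
    unfolding covered_by_pure_def using T(1) by (intro exI[of _ "(\<lambda>t. t(L x := \<sigma> x)) ` T"]) auto
qed

definition beta_below :: "nat \<Rightarrow> ('a, 'i) game \<Rightarrow> 'a list \<Rightarrow> nat" where
  "beta_below n G x =
     (if subtree_chance G x = {} then 1 else Max (beta_fuel n G ` subtree_chance G x))"

lemma beta_fuel_Suc_eq_sum_beta_below:
  "beta_fuel (Suc n) G h = (\<Sum>a\<in>actions G h. beta_below n G (h @ [a]))"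
  by (simp add: beta_below_def)

lemma beta_max_eq_beta_below: "beta_max G = beta_below (card (nodes G)) G []"
proof -
  have "subtree_chance G [] = chance G" by (auto simp: subtree_chance_def)
  then show ?thesis by (simp add: beta_max_def beta_below_def beta_def)
qed

lemma finite_subtree_chance: "wf_game G \<Longrightarrow> finite (subtree_chance G x)"
  unfolding subtree_chance_def wf_game_def by (auto intro: finite_subset)

lemma beta_below_ge_Max:
  "wf_game G \<Longrightarrow> c \<in> subtree_chance G x \<Longrightarrow> beta_fuel n G c \<le> beta_below n G x"
  using finite_subtree_chance by (fastforce simp: beta_below_def)

lemma beta_below_ge_1_if:
  assumes wf: "wf_game G" and "\<And>c. c \<in> chance G \<Longrightarrow> 1 \<le> beta_fuel n G c"
  shows "1 \<le> beta_below n G x"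
proof (cases "subtree_chance G x = {}")
  case False
  then obtain c where c: "c \<in> subtree_chance G x" by blast
  then have "c \<in> chance G" by (simp add: subtree_chance_def)
  then show ?thesis using assms(2)[of c] beta_below_ge_Max[OF wf c, of n] by linarith
qed (simp add: beta_below_def)

lemma beta_fuel_ge_1:
  assumes wf: "wf_game G" and "c \<in> chance G"
  shows "1 \<le> beta_fuel n G c"
  using assms(2)
proof (induction n arbitrary: c)
  case (Suc n)
  have "card (actions G c) = (\<Sum>a\<in>actions G c. 1)" by simp
  also have "\<dots> \<le> (\<Sum>a\<in>actions G c. beta_below n G (c @ [a]))"
    by (intro sum_mono beta_below_ge_1_if[OF wf Suc.IH])
  also have "\<dots> = beta_fuel (Suc n) G c" by (rule beta_fuel_Suc_eq_sum_beta_below[symmetric])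
  finally have "card (actions G c) \<le> beta_fuel (Suc n) G c" .
  moreover have "1 \<le> card (actions G c)"
    using wf Suc.prems wf_game_finite_actions[OF wf] by (simp add: wf_game_def Suc_le_eq card_gt_0_iff)
  ultimately show ?case by linarith
qed simp

lemma beta_below_ge_1: "wf_game G \<Longrightarrow> 1 \<le> beta_below n G x"
  by (metis beta_below_ge_1_if beta_fuel_ge_1)

lemma beta_below_snoc_le:
  assumes wf: "wf_game G"
  shows "beta_below n G (x @ [a]) \<le> beta_below n G x"
proof (cases "subtree_chance G (x @ [a]) = {}")
  case True
  then show ?thesis using beta_below_ge_1[OF wf] by (simp add: beta_below_def)
next
  case False
  have "subtree_chance G (x @ [a]) \<subseteq> subtree_chance G x" by (auto simp: subtree_chance_def)
  with False show ?thesis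
    using finite_subtree_chance[OF wf] by (auto simp: beta_below_def intro!: Max_mono)
qed

text \<open>The fuel \<open>n\<close> exceeds the height of the subtree below \<open>x\<close>, so that \<open>beta_fuel\<close> is
  never cut off at a chance node of that subtree.\<close>

lemma covered_by_pure_beta_below:
  assumes wf: "wf_game G" and nam: "no_absentmindedness_wrt G L"
    and "\<forall>w. x @ w \<in> nodes G \<longrightarrow> length w < n"
  shows "covered_by_pure G L \<sigma> x (beta_below n G x)"
  using assms(3)
proof (induction x arbitrary: n rule: measure_induct_rule[of "\<lambda>x. card (nodes G) - length x"])
  case (less x)
  have child_smaller: "card (nodes G) - length (x @ [a]) < card (nodes G) - length x"
    if "x \<in> nodes G" for a
    using wf_game_length_less_card[OF wf that] by simp
  consider (not_node) "x \<notin> nodes G" | (leaf) "x \<in> leaves G" | (chance) "x \<in> chance G"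
    | (player) "x \<in> p1_nodes G"
    by (auto simp: leaves_def p1_nodes_def)
  then show ?case
  proof cases
    case not_node
    then show ?thesis by (rule covered_by_pure_not_node[OF wf])
  next
    case leaf
    then show ?thesis by (rule covered_by_pure_leaf[OF wf _ beta_below_ge_1[OF wf]])
  next
    case chance
    obtain a0 where "a0 \<in> actions G x" using wf chance unfolding wf_game_def by blast
    then have "length [a0] < n" using less.prems unfolding actions_def by blast
    then obtain m where n: "n = Suc m" by (cases n) auto
    have xn: "x \<in> nodes G" using wf chance by (auto simp: wf_game_def)
    have "covered_by_pure G L \<sigma> (x @ [a]) (beta_below m G (x @ [a]))" for a
      using less.prems n by (intro less.IH[OF child_smaller[OF xn]]) auto
    then have "covered_by_pure G L \<sigma> x (beta_fuel n G x)"
      unfolding n beta_fuel_Suc_eq_sum_beta_below by (rule covered_by_pure_chance[OF wf chance])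
    moreover have "x \<in> subtree_chance G x" using chance by (simp add: subtree_chance_def)
    ultimately show ?thesis
      using beta_below_ge_Max[OF wf] covered_by_pure_mono by blast
  next
    case player
    have "x \<in> nodes G" using player by (simp add: p1_nodes_def)
    then have "covered_by_pure G L \<sigma> (x @ [\<sigma> x]) (beta_below n G (x @ [\<sigma> x]))"
      using less.prems by (intro less.IH[OF child_smaller]) auto
    then show ?thesis
      using covered_by_pure_p1[OF wf nam player] covered_by_pure_mono beta_below_snoc_le[OF wf] by blast
  qed
qed

lemma covered_by_pure_beta_max:
  assumes wf: "wf_game G" and nam: "no_absentmindedness_wrt G L"
  shows "covered_by_pure G L \<sigma> [] (beta_max G)"
  unfolding beta_max_eq_beta_below
  using wf_game_length_less_card[OF wf] by (intro covered_by_pure_beta_below[OF wf nam]) simp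

section \<open>Comparison of optimal values\<close>

definition chance_prob :: "('a, 'i) game \<Rightarrow> 'a list \<Rightarrow> real" where
  "chance_prob G z = (\<Prod>i<length z. if take i z \<in> chance G then cprob G (take i z) (z ! i) else 1)"

lemma chance_prob_nonneg: "wf_game G \<Longrightarrow> z \<in> nodes G \<Longrightarrow> 0 \<le> chance_prob G z"
  unfolding chance_prob_def
  using wf_game_cprob_bounds wf_game_nth_in_actions by (fastforce intro: prod_nonneg)

lemma reach_pure:
  "reach G L (pure s) z = (if follows G (s \<circ> L) z 0 then chance_prob G z else 0)"
proof (cases "follows G (s \<circ> L) z 0")
  case True
  then show ?thesis unfolding reach_def chance_prob_def
    by (auto intro!: prod.cong simp: follows_def pure_def)
next
  case False
  then obtain j where "j < length z" "take j z \<notin> chance G" "z ! j \<noteq> s (L (take j z))"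
    unfolding follows_def by auto
  then have "reach G L (pure s) z = 0"
    unfolding reach_def by (intro prod_zero bexI[of _ j]) (auto simp: pure_def)
  then show ?thesis using False by simp
qed

definition plan_value :: "('a, 'i) game \<Rightarrow> ('a list \<Rightarrow> 'a) \<Rightarrow> ('a list \<Rightarrow> real) \<Rightarrow> real" where
  "plan_value G \<sigma> u = (\<Sum>z\<in>leaves_following G \<sigma> []. chance_prob G z * u z)"

lemma exp_util_pure:
  assumes wf: "wf_game G"
  shows "exp_util G L (pure s) u = plan_value G (s \<circ> L) u"
proof -
  have "leaves_following G (s \<circ> L) [] = {z \<in> leaves G. follows G (s \<circ> L) z 0}"
    by (simp add: leaves_following_def)
  moreover have "finite (leaves G)" using wf by (simp add: wf_game_def leaves_def)
  ultimately show ?thesis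
    by (auto simp: plan_value_def exp_util_def reach_pure sum.inter_filter intro!: sum.cong)
qed

lemma plan_value_summand_nonneg:
  assumes "wf_game G" and "\<forall>z\<in>leaves G. 0 \<le> u z" and "z \<in> leaves_following G \<sigma> x"
  shows "0 \<le> chance_prob G z * u z"
  using assms chance_prob_nonneg by (fastforce simp: leaves_following_def leaves_def)

lemma plan_value_mono:
  assumes wf: "wf_game G" and u: "\<forall>z\<in>leaves G. 0 \<le> u z"
    and "leaves_following G \<sigma> [] \<subseteq> leaves_following G \<sigma>' []"
  shows "plan_value G \<sigma> u \<le> plan_value G \<sigma>' u"
  unfolding plan_value_def using assms plan_value_summand_nonneg[OF wf u] finite_leaves_following[OF wf]
  by (intro sum_mono2) auto

lemma behavioral_pure_iff:
  assumes wf: "wf_game G"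
  shows "behavioral G L (pure s) \<longleftrightarrow> (\<forall>h\<in>p1_nodes G. s (L h) \<in> actions G h)"
  using wf_game_finite_actions[OF wf] by (auto simp: behavioral_def pure_def indicator_def Int_insert_right)

text \<open>A pure strategy may prescribe unavailable actions, but only at labels its plays never
  reach.\<close>

lemma exists_behavioral_pure_extension:
  assumes wf: "wf_game G" and ac: "action_consistent G L"
  obtains t' where "behavioral G L (pure t')"
    and "leaves_following G (t \<circ> L) [] \<subseteq> leaves_following G (t' \<circ> L) []"
proof -
  define available where "available l a \<longleftrightarrow> (\<forall>h\<in>p1_nodes G. L h = l \<longrightarrow> a \<in> actions G h)" for l a
  define t' where "t' l = (if available l (t l) then t l else (SOME a. available l a))" for l
  have available_iff: "available (L h) a \<longleftrightarrow> a \<in> actions G h" if "h \<in> p1_nodes G" for h a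
    using ac that unfolding available_def action_consistent_def by metis
  have "t' (L h) \<in> actions G h" if h: "h \<in> p1_nodes G" for h
  proof -
    obtain a where "a \<in> actions G h" using h by (auto simp: p1_nodes_def)
    then have "available (L h) (SOME a. available (L h) a)"
      using available_iff[OF h] by (metis someI)
    then show ?thesis using available_iff[OF h] by (simp add: t'_def)
  qed
  moreover have "follows G (t' \<circ> L) z 0" if "z \<in> leaves_following G (t \<circ> L) []" for z
  proof -
    have z: "z \<in> nodes G" "follows G (t \<circ> L) z 0"
      using that by (auto simp: leaves_following_def leaves_def)
    have "available (L (take j z)) (t (L (take j z)))"
      if "j < length z" "take j z \<notin> chance G" for j
      using z wf_game_nth_in_actions[OF wf z(1) that(1)] that
        available_iff[OF wf_game_take_in_p1_nodes[OF wf z(1) that]] by (auto simp: follows_def)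
    then show ?thesis using z(2) by (auto simp: follows_def t'_def)
  qed
  ultimately show ?thesis
    by (intro that[of t']) (auto simp: behavioral_pure_iff[OF wf] leaves_following_def)
qed

lemma sum_le_sum_over_cover:
  fixes f :: "'a \<Rightarrow> 'b::ordered_comm_monoid_add"
  assumes "finite T" and "\<And>t. t \<in> T \<Longrightarrow> finite (B t)"
    and "\<And>t x. t \<in> T \<Longrightarrow> x \<in> B t \<Longrightarrow> 0 \<le> f x" and "A \<subseteq> (\<Union>t\<in>T. B t)"
  shows "sum f A \<le> (\<Sum>t\<in>T. sum f (B t))"
  using assms
proof (induction T arbitrary: A rule: finite_induct)
  case (insert t T)
  have "finite A" using insert.prems by (meson finite_UN_I finite_insert finite_subset insert.hyps(1))
  then have "sum f A = sum f (A \<inter> B t) + sum f (A - B t)" by (rule sum.Int_Diff)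
  also have "\<dots> \<le> sum f (B t) + (\<Sum>t\<in>T. sum f (B t))"
    using insert by (intro add_mono sum_mono2 insert.IH) auto
  finally show ?case using insert.hyps by simp
qed simp

lemma opt_val_nonneg:
  assumes wf: "wf_game G" and ac: "action_consistent G L" and u: "\<forall>z\<in>leaves G. 0 \<le> u z"
  shows "0 \<le> opt_val G L u"
proof -
  obtain t where "behavioral G L (pure t)"
    using exists_behavioral_pure_extension[OF wf ac] by blast
  then show ?thesis
    using exp_util_bounds[OF wf _ u] exp_util_le_opt_val[OF wf _ u] by (meson order_trans)
qed

lemma plan_value_le_opt_val:
  assumes wf: "wf_game G" and ac: "action_consistent G L" and u: "\<forall>z\<in>leaves G. 0 \<le> u z"
  shows "plan_value G (t \<circ> L) u \<le> opt_val G L u"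
proof -
  obtain t' where t': "behavioral G L (pure t')"
    "leaves_following G (t \<circ> L) [] \<subseteq> leaves_following G (t' \<circ> L) []"
    using exists_behavioral_pure_extension[OF wf ac] by blast
  have "plan_value G (t \<circ> L) u \<le> exp_util G L (pure t') u"
    unfolding exp_util_pure[OF wf] by (rule plan_value_mono[OF wf u t'(2)])
  also have "\<dots> \<le> opt_val G L u" by (rule exp_util_le_opt_val[OF wf t'(1) u])
  finally show ?thesis .
qed

lemma plan_value_le_beta_max_opt_val:
  assumes wf: "wf_game G" and nam: "no_absentmindedness_wrt G L" and ac: "action_consistent G L"
    and u: "\<forall>z\<in>leaves G. 0 \<le> u z"
  shows "plan_value G \<sigma> u \<le> real (beta_max G) * opt_val G L u"
proof -
  obtain T where T: "finite T" "card T \<le> beta_max G"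
    "\<forall>z\<in>leaves_following G \<sigma> []. \<exists>t\<in>T. follows G (t \<circ> L) z 0"
    using covered_by_pure_beta_max[OF wf nam, of \<sigma>] unfolding covered_by_pure_def by auto
  have "leaves_following G \<sigma> [] \<subseteq> (\<Union>t\<in>T. leaves_following G (t \<circ> L) [])"
    using T(3) by (auto simp: leaves_following_def)
  then have "plan_value G \<sigma> u \<le> (\<Sum>t\<in>T. plan_value G (t \<circ> L) u)"
    unfolding plan_value_def using plan_value_summand_nonneg[OF wf u]
    by (intro sum_le_sum_over_cover[OF T(1) finite_leaves_following[OF wf]])
  also have "\<dots> \<le> (\<Sum>t\<in>T. opt_val G L u)" by (intro sum_mono plan_value_le_opt_val[OF wf ac u])
  also have "\<dots> \<le> real (beta_max G) * opt_val G L u"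
    using T(2) opt_val_nonneg[OF wf ac u] by (simp add: mult_right_mono)
  finally show ?thesis .
qed

lemma opt_val_refinement_le:
  assumes wf: "wf_game G" and noabs: "no_absentmindedness G"
    and refines: "\<And>h h'. L h = L h' \<Longrightarrow> info G h = info G h'"
    and u: "\<forall>z\<in>leaves G. 0 \<le> u z"
  shows "opt_val G L u \<le> real (beta_max G) * opt_val G (info G) u"
proof -
  have ac_info: "action_consistent G (info G)" by (rule wf_game_action_consistent_info[OF wf])
  have nam_info: "no_absentmindedness_wrt G (info G)"
    using noabs by (simp add: no_absentmindedness_iff_wrt_info)
  have ac: "action_consistent G L" by (rule action_consistent_refine[OF ac_info refines])
  have nam: "no_absentmindedness_wrt G L" by (rule no_absentmindedness_wrt_refine[OF nam_info refines])
  obtain t0 where "behavioral G L (pure t0)"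
    using exists_behavioral_pure_extension[OF wf ac] by blast
  then show ?thesis
  proof (rule opt_val_le)
    fix \<pi> assume "behavioral G L \<pi>"
    then obtain s where "exp_util G L \<pi> u \<le> exp_util G L (pure s) u"
      using exists_pure_dominating[OF wf nam ac] by blast
    also have "\<dots> = plan_value G (s \<circ> L) u" by (rule exp_util_pure[OF wf])
    also have "\<dots> \<le> real (beta_max G) * opt_val G (info G) u"
      by (rule plan_value_le_beta_max_opt_val[OF wf nam_info ac_info u])
    finally show "exp_util G L \<pi> u \<le> real (beta_max G) * opt_val G (info G) u" .
  qed
qed

theorem corollary4:
  fixes G :: "('a, 'i) game"
  assumes "wf_game G" and "no_absentmindedness G"
  shows "VoR_opt_class G \<le> real (beta_max G)"
proof -
  have "VoR_opt G u \<le> real (beta_max G)" if u: "\<forall>z\<in>leaves G. 0 \<le> u z" for u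
  proof -
    have "opt_val G (pr1_labels G) u \<le> real (beta_max G) * opt_val G (info G) u"
      using assms u by (intro opt_val_refinement_le) (auto simp: pr1_labels_def)
    moreover have "0 \<le> opt_val G (info G) u"
      using opt_val_nonneg[OF assms(1) wf_game_action_consistent_info[OF assms(1)] u] .
    ultimately show ?thesis
      by (cases "opt_val G (info G) u = 0") (simp_all add: VoR_opt_def pos_divide_le_eq)
  qed
  then show ?thesis unfolding VoR_opt_class_def by (intro cSUP_least) auto
qed

end
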